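(* Let $\mathcal V=\{v^{(1)},\dots,v^{(p)}\}\subset(\mathbb{R}\cup\{-\infty\})^n$ be a finite set, $V$ the matrix with columns $v^{(k)}$, with no row and no column identically $-\infty$, and let $$T_i(x)=\inf_{k\in[p],\,V_{ik}\neq-\infty}\Big[-V_{ik}+\max_{j\in[n],\,j\neq i}(V_{jk}+x_j)\Big],\qquad i\in[n].$$ Let $W=\max_{v\in\mathcal V}\|v\|_H$. Then any finite eigenvector $u\in\mathbb{R}^n$ of $T$ (i.e. $T(u)=\lambda+u$ for some $\lambda$) satisfies $\|u\|_H\le W$.
   Context: $-\infty+c=-\infty$, $\max\emptyset=-\infty$. Hilbert's seminorm: $\|x\|_H=\max_i x_i-\min_i x_i$ (equal to $+\infty$ if some but not all entries are $-\infty$). *)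

theory Defs
  imports "HOL-Library.Extended_Real"
begin

text \<open>Vectors in (R u {-infinity})^n are functions from a finite index type 'n to ereal
  that never take the value +infinity. The matrix V has rows indexed by 'n and
  columns indexed by 'p.\<close>

text \<open>Hilbert's seminorm: max_i x_i - min_i x_i, computed in ereal
  (so it is +infinity if some but not all entries are -infinity).\<close>
definition hilbert_sn :: "('n::finite \<Rightarrow> ereal) \<Rightarrow> ereal" where
  "hilbert_sn x = Max (range x) - Min (range x)"

text \<open>The operator T; Sup of the empty set is -infinity in ereal, matching max of empty = -infinity.\<close>
definition shapley_T :: "('n::finite \<Rightarrow> 'p::finite \<Rightarrow> ereal) \<Rightarrow> ('n \<Rightarrow> real) \<Rightarrow> 'n \<Rightarrow> ereal" where
  "shapley_T V x i =
     (INF k \<in> {k. V i k \<noteq> -\<infinity>}. - V i k + (SUP j \<in> {j. j \<noteq> i}. V j k + ereal (x j)))"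

end

(* The eigenvalue is nonpositive: in any column k, the row i maximising V i k + u i gives
   T i u <= u i. Hence for all rows i, j, the column k attaining the infimum in T i u satisfies
   u i >= lam + u i = T i u >= - V i k + V j k + u j, i.e. u j - u i <= V i k - V j k, which is at most
   the Hilbert seminorm of column k. *)
theory Submission
  imports Defs
begin

lemma hilbert_sn_diff_le: "x i - x j \<le> hilbert_sn x"
  unfolding hilbert_sn_def by (intro ereal_minus_mono Max_ge Min_le) auto

lemma ex_hilbert_sn_eq_diff: "\<exists>i j. hilbert_sn x = x i - x j"
proof -
  have "Max (range x) \<in> range x" "Min (range x) \<in> range x"
    by (intro Max_in Min_in; simp)+
  then show ?thesis unfolding hilbert_sn_def by (metis imageE)
qed

lemma hilbert_sn_le_iff: "hilbert_sn x \<le> c \<longleftrightarrow> (\<forall>i j. x i - x j \<le> c)"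
  by (metis ex_hilbert_sn_eq_diff hilbert_sn_diff_le order_trans)

lemma shapley_T_le:
  assumes "V i k \<noteq> -\<infinity>"
  shows "shapley_T V x i \<le> - V i k + (SUP j \<in> {j. j \<noteq> i}. V j k + ereal (x j))"
  unfolding shapley_T_def using assms by (intro INF_lower) auto

lemma shapley_T_attained:
  assumes "\<exists>k. V i k \<noteq> -\<infinity>"
  obtains k where "V i k \<noteq> -\<infinity>"
    and "shapley_T V x i = - V i k + (SUP j \<in> {j. j \<noteq> i}. V j k + ereal (x j))"
proof -
  let ?g = "\<lambda>k. - V i k + (SUP j \<in> {j. j \<noteq> i}. V j k + ereal (x j))"
  let ?K = "?g ` {k. V i k \<noteq> -\<infinity>}"
  have "shapley_T V x i = Inf ?K"
    unfolding shapley_T_def ..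
  also have "\<dots> = Min ?K"
    using assms by (intro Min_Inf[symmetric]) auto
  also have "\<dots> \<in> ?K"
    using assms by (intro Min_in) auto
  finally show ?thesis using that by blast
qed

lemma shapley_eigenvalue_nonpos:
  fixes V :: "'n::finite \<Rightarrow> 'p::finite \<Rightarrow> ereal" and u :: "'n \<Rightarrow> real"
  assumes col_entries: "\<And>i. V i k \<noteq> \<infinity>"
    and col_finite: "\<exists>i. V i k \<noteq> -\<infinity>"
    and eig: "\<And>i. shapley_T V u i = lam + ereal (u i)"
  shows "lam \<le> 0"
proof -
  define f where "f j = V j k + ereal (u j)" for j
  have "Max (range f) \<in> range f"
    by (intro Max_in) simp_all
  then obtain i where i: "f i = Max (range f)"
    by (metis imageE)
  have f_le: "f j \<le> f i" for j
    unfolding i by (rule Max_ge) simp_all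
  obtain i' where "V i' k \<noteq> -\<infinity>"
    using col_finite ..
  then have "f i' \<noteq> -\<infinity>"
    using col_entries[of i'] by (cases "V i' k") (auto simp: f_def)
  then have "V i k \<noteq> -\<infinity>"
    using f_le[of i'] by (auto simp: f_def)
  then obtain r where r: "V i k = ereal r"
    using col_entries[of i] by (cases "V i k") auto
  have "lam + ereal (u i) \<le> - V i k + (SUP j \<in> {j. j \<noteq> i}. f j)"
    using shapley_T_le[of V i k u] \<open>V i k \<noteq> -\<infinity>\<close> eig[of i] by (simp add: f_def)
  also have "\<dots> \<le> - V i k + f i"
    by (intro add_left_mono SUP_least f_le)
  also have "- V i k + f i = ereal (u i)"
    by (simp add: f_def r)
  finally show ?thesis
    by (cases lam) auto
qed

lemma shapley_eigenvector_diff_le: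
  fixes V :: "'n::finite \<Rightarrow> 'p::finite \<Rightarrow> ereal" and u :: "'n \<Rightarrow> real"
  assumes row_entries: "\<And>k. V i k \<noteq> \<infinity>"
    and row_finite: "\<exists>k. V i k \<noteq> -\<infinity>"
    and eig: "shapley_T V u i = lam + ereal (u i)"
    and "lam \<le> 0"
  shows "\<exists>k. ereal (u j) - ereal (u i) \<le> V i k - V j k"
proof -
  obtain k where "V i k \<noteq> -\<infinity>"
    and T_eq: "shapley_T V u i = - V i k + (SUP j \<in> {j. j \<noteq> i}. V j k + ereal (u j))"
    using shapley_T_attained[of V i u] row_finite by blast
  then obtain r where r: "V i k = ereal r"
    using row_entries[of k] by (cases "V i k") auto
  have "ereal (u j) - ereal (u i) \<le> V i k - V j k"
  proof (cases "j = i")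
    case False
    then have "V j k + ereal (u j) \<le> (SUP j \<in> {j. j \<noteq> i}. V j k + ereal (u j))"
      by (intro SUP_upper) simp
    then have "- V i k + (V j k + ereal (u j)) \<le> shapley_T V u i"
      unfolding T_eq by (rule add_left_mono)
    then show ?thesis
      using \<open>lam \<le> 0\<close> unfolding eig r by (cases "V j k"; cases lam) auto
  qed (simp add: r)
  then show ?thesis ..
qed

theorem lemma6p2:
  fixes V :: "'n::finite \<Rightarrow> 'p::finite \<Rightarrow> ereal"
    and u :: "'n \<Rightarrow> real"
    and lam :: ereal
  assumes entries: "\<And>i k. V i k \<noteq> \<infinity>"
    and no_row: "\<And>i. \<exists>k. V i k \<noteq> -\<infinity>"
    and no_col: "\<And>k. \<exists>i. V i k \<noteq> -\<infinity>"
    and eig: "\<And>i. shapley_T V u i = lam + ereal (u i)"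
  shows "hilbert_sn (\<lambda>i. ereal (u i)) \<le> Max (range (\<lambda>k. hilbert_sn (\<lambda>i. V i k)))"
proof -
  let ?W = "Max (range (\<lambda>k. hilbert_sn (\<lambda>i. V i k)))"
  have "lam \<le> 0"
    \<comment> \<open>any column will do\<close>
    using shapley_eigenvalue_nonpos[of V undefined u lam] entries no_col eig by blast
  have "ereal (u j) - ereal (u i) \<le> ?W" for i j
  proof -
    obtain k where "ereal (u j) - ereal (u i) \<le> V i k - V j k"
      using shapley_eigenvector_diff_le[of V i u lam j] entries no_row eig \<open>lam \<le> 0\<close> by blast
    also have "\<dots> \<le> hilbert_sn (\<lambda>i. V i k)"
      by (rule hilbert_sn_diff_le)
    also have "\<dots> \<le> ?W"
      by (rule Max_ge) simp_all
    finally show ?thesis .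
  qed
  then show ?thesis
    by (simp add: hilbert_sn_le_iff)
qed

end
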